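(* Let $\sigma\in\mathrm{NC}_n$ and $1\le i<j\le n$. Then $(i,j)\in\mathrm{Inv}_{\mathrm{NC}}(\sigma)$ if and only if $i$ is the smallest element of its cycle of $\sigma$ and either (1) $j$ belongs to the same cycle as $i$, or (2) $\sigma(j)<i<j$ and $j$ is minimal with respect to this property.
   Context: A set partition of $[n]$ is noncrossing if there are no distinct blocks $P,Q$ with $a,b\in P$, $c,d\in Q$, $a<c<b<d$; the associated permutation acts on each block $\{a_1<\dots<a_p\}$ by $a_j\mapsto a_{j-1}$ ($j\ge2$), $a_1\mapsto a_p$; $\mathrm{NC}_n$ is the set of these noncrossing permutations, whose cycles are the blocks. For $\sigma\in\mathrm{NC}_n$, $\mathrm{Inv}_{\mathrm{NC}}(\sigma)=\{(i,j)\in[n]^2: i<j,\ \sigma\circ(i\,j)\in\mathrm{NC}_n,\ \sigma(i)>\sigma(j)\}$, where $(i\,j)$ is the transposition. *)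

theory Defs
  imports "HOL-Combinatorics.Combinatorics" "HOL-Library.Disjoint_Sets"
begin

definition noncrossing :: "nat set set \<Rightarrow> bool" where
  "noncrossing Ps \<longleftrightarrow>
     (\<forall>P\<in>Ps. \<forall>Q\<in>Ps. P \<noteq> Q \<longrightarrow>
        \<not> (\<exists>a b c d. a \<in> P \<and> b \<in> P \<and> c \<in> Q \<and> d \<in> Q \<and> a < c \<and> c < b \<and> b < d))"

definition nc_partition :: "nat \<Rightarrow> nat set set \<Rightarrow> bool" where
  "nc_partition n Ps \<longleftrightarrow> partition_on {1..n} Ps \<and> noncrossing Ps"

definition assoc_perm :: "nat set set \<Rightarrow> nat \<Rightarrow> nat" where
  "assoc_perm Ps x =
     (if \<exists>B\<in>Ps. x \<in> B then
        (let B = (THE B. B \<in> Ps \<and> x \<in> B) in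
           if x = Min B then Max B else Max {y \<in> B. y < x})
      else x)"

definition NC :: "nat \<Rightarrow> (nat \<Rightarrow> nat) set" where
  "NC n = {assoc_perm Ps | Ps. nc_partition n Ps}"

text \<open>Noncrossing inversions; \<open>\<sigma> \<circ> transpose i j\<close> is \<open>\<sigma> \<circ> (i j)\<close>.\<close>
definition Inv_NC :: "nat \<Rightarrow> (nat \<Rightarrow> nat) \<Rightarrow> (nat \<times> nat) set" where
  "Inv_NC n \<sigma> = {(i, j). i \<in> {1..n} \<and> j \<in> {1..n} \<and> i < j \<and>
                        \<sigma> \<circ> transpose i j \<in> NC n \<and> \<sigma> i > \<sigma> j}"

end

(*
  On each block B the permutation sigma = assoc_perm Ps is the cyclic predecessor in B, and
  tau = sigma o (i j) splits the block of i and j if they share one and merges their two blocks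
  otherwise.  A split at the minimum i of a block always gives a noncrossing partition, and then
  sigma(j) < sigma(i) = max B; if i is not the minimum, sigma(i) < i <= sigma(j).  For a merge,
  tau is noncrossing and sigma(j) < sigma(i) exactly when the block of i = min lies in the gap
  (sigma(j), j) of the block of j and no other block has points on both sides of i below j, which
  is the minimality of j.  Crossings are controlled through cyclic gaps: two disjoint blocks do not
  cross iff one lies in a single cyclic gap of the other, and the gaps of the merged block are those
  of its two parts, with the gap (sigma(j), j) cut at i.
*)
theory Submission
  imports Defs
begin

section \<open>Cyclic predecessor\<close>

definition cyclic_pred :: "nat set \<Rightarrow> nat \<Rightarrow> nat" where
  "cyclic_pred B x = (if x = Min B then Max B else Max {y\<in>B. y < x})"

text \<open>The open arc from \<open>v\<close> to \<open>x\<close> when the naturals are read cyclically upwards; it is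
  everything outside \<open>[x, v]\<close> when \<open>x \<le> v\<close>.\<close>
definition cyclic_gap :: "nat \<Rightarrow> nat \<Rightarrow> nat set" where
  "cyclic_gap v x = (if v < x then {v<..<x} else {..<x} \<union> {v<..})"

lemma cyclic_pred_eq_iff:
  assumes B: "finite B" and x: "x \<in> B"
  shows "cyclic_pred B x = v \<longleftrightarrow> v \<in> B \<and> B \<inter> cyclic_gap v x = {}"
proof (cases "x = Min B")
  case True
  then have pred: "cyclic_pred B x = Max B" and min: "\<forall>y\<in>B. x \<le> y"
    using B by (simp_all add: cyclic_pred_def)
  have "Max B \<in> B" and "\<forall>y\<in>B. y \<le> Max B"
    using B x by (auto intro: Max_in)
  then show ?thesis
    unfolding pred cyclic_gap_def using min x by (auto simp: disjoint_iff) (meson antisym not_le)+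
next
  case False
  define m where "m = Max {y\<in>B. y < x}"
  have "Min B < x" and "Min B \<in> B"
    using B x False by (auto intro: Min_in order_le_neq_trans)
  then have "m \<in> {y\<in>B. y < x}"
    unfolding m_def using B by (intro Max_in) auto
  then have m: "m \<in> B" "m < x" "\<forall>y\<in>B. y < x \<longrightarrow> y \<le> m"
    using B by (auto simp: m_def)
  moreover have "cyclic_pred B x = m"
    using False by (simp add: cyclic_pred_def m_def)
  ultimately show ?thesis
    using \<open>Min B < x\<close> \<open>Min B \<in> B\<close>
    by (auto simp: cyclic_gap_def disjoint_iff) (meson antisym not_le)+
qed

lemma cyclic_pred_in: "finite B \<Longrightarrow> x \<in> B \<Longrightarrow> cyclic_pred B x \<in> B"
  using cyclic_pred_eq_iff by blast

lemma cyclic_pred_gap: "finite B \<Longrightarrow> x \<in> B \<Longrightarrow> B \<inter> cyclic_gap (cyclic_pred B x) x = {}"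
  using cyclic_pred_eq_iff by blast

lemma cyclic_pred_less:
  assumes "finite B" "x \<in> B" "y \<in> B" "y < x"
  shows "y \<le> cyclic_pred B x" and "cyclic_pred B x < x"
  using cyclic_pred_gap[OF assms(1,2)] assms(3,4)
  by (auto simp: cyclic_gap_def disjoint_iff split: if_splits)

lemma cyclic_pred_ge:
  assumes "finite B" "x \<in> B" "x \<le> cyclic_pred B x" "y \<in> B"
  shows "x \<le> y" and "y \<le> cyclic_pred B x"
  using cyclic_pred_gap[OF assms(1,2)] assms(3,4)
  by (auto simp: cyclic_gap_def disjoint_iff split: if_splits)

lemma cyclic_pred_subset:
  assumes B: "finite B" and A: "A \<subseteq> B" "x \<in> A" "cyclic_pred B x \<in> A"
  shows "cyclic_pred A x = cyclic_pred B x"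
proof -
  have "A \<inter> cyclic_gap (cyclic_pred B x) x = {}"
    using cyclic_pred_gap[OF B, of x] A by blast
  then show ?thesis
    using cyclic_pred_eq_iff[OF finite_subset[OF A(1) B] A(2)] A(3) by simp
qed

lemma cyclic_pred_union:
  assumes A: "finite A" "x \<in> A" and B: "finite B" "B \<inter> cyclic_gap (cyclic_pred A x) x = {}"
  shows "cyclic_pred (A \<union> B) x = cyclic_pred A x"
proof -
  have "(A \<union> B) \<inter> cyclic_gap (cyclic_pred A x) x = {}"
    using cyclic_pred_gap[OF A] B(2) by (simp add: Int_Un_distrib2)
  then show ?thesis
    using cyclic_pred_eq_iff[of "A \<union> B" x] cyclic_pred_in[OF A] A B(1) by simp
qed

lemma cyclic_pred_successor:
  assumes B: "finite B" and M: "M \<in> B" "M < Max B"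
  obtains t where "t \<in> B" "M < t" "cyclic_pred B t = M"
proof -
  define t where "t = Min {z\<in>B. M < z}"
  have "t \<in> {z\<in>B. M < z}"
    unfolding t_def using B M by (intro Min_in) (auto intro: Max_in)
  then have t: "t \<in> B" "M < t" "\<forall>z\<in>B. M < z \<longrightarrow> t \<le> z"
    using B by (auto simp: t_def)
  have "B \<inter> {M<..<t} = {}"
    using t(3) by fastforce
  then have "cyclic_pred B t = M"
    using cyclic_pred_eq_iff[OF B, of t M] t M by (simp add: cyclic_gap_def)
  with t that show ?thesis
    by blast
qed

lemma cyclic_pred_closed_imp_subset:
  assumes B: "finite B" and y: "y \<in> B \<inter> S" and closed: "\<forall>x\<in>B \<inter> S. cyclic_pred B x \<in> S"
  shows "B \<subseteq> S"
proof -
  have "Min B \<in> B"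
    using B y by (intro Min_in) auto
  define m where "m = Min (B \<inter> S)"
  have m: "m \<in> B \<inter> S"
    unfolding m_def using B y by (intro Min_in) auto
  have "m = Min B"
  proof (rule ccontr)
    assume "m \<noteq> Min B"
    then have "cyclic_pred B m < m"
      using cyclic_pred_less(2)[OF B _ \<open>Min B \<in> B\<close>] B m by (simp add: order_le_neq_trans)
    moreover have "cyclic_pred B m \<in> B \<inter> S"
      using B m closed cyclic_pred_in by blast
    ultimately show False
      using B unfolding m_def by (metis Min_le finite_Int leD)
  qed
  then have "Max B \<in> S"
    using closed[rule_format, of "Min B"] m by (simp add: cyclic_pred_def)
  show "B \<subseteq> S"
  proof (rule ccontr)
    assume "\<not> B \<subseteq> S"
    define M where "M = Max (B - S)"
    have M: "M \<in> B - S"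
      unfolding M_def using B \<open>\<not> B \<subseteq> S\<close> by (intro Max_in) auto
    then have "M < Max B"
      using Max_ge[OF B, of M] \<open>Max B \<in> S\<close> by (cases "M = Max B") auto
    then obtain t where t: "t \<in> B" "M < t" "cyclic_pred B t = M"
      using cyclic_pred_successor[OF B] M by blast
    have "t \<in> S"
      using t(1,2) B unfolding M_def by (meson DiffI Max_ge finite_Diff leD)
    then show False
      using closed t M by auto
  qed
qed

section \<open>Crossing and cyclic gaps\<close>

definition cross :: "nat set \<Rightarrow> nat set \<Rightarrow> bool" where
  "cross P Q \<longleftrightarrow> (\<exists>a b c d. a \<in> P \<and> b \<in> P \<and> c \<in> Q \<and> d \<in> Q \<and> a < c \<and> c < b \<and> b < d)"

lemma noncrossing_iff_not_cross: "noncrossing Ps \<longleftrightarrow> (\<forall>P\<in>Ps. \<forall>Q\<in>Ps. P \<noteq> Q \<longrightarrow> \<not> cross P Q)"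
  unfolding noncrossing_def cross_def by simp

lemma cross_mono: "cross P Q \<Longrightarrow> P \<subseteq> P' \<Longrightarrow> Q \<subseteq> Q' \<Longrightarrow> cross P' Q'"
  unfolding cross_def by blast

text \<open>A crossing needs a point of each set strictly between two points of the other.\<close>
lemma not_cross_if_in_cyclic_gap:
  assumes C: "finite C" "x \<in> C" and D: "D \<subseteq> cyclic_gap (cyclic_pred C x) x"
  shows "\<not> cross C D \<and> \<not> cross D C"
proof -
  let ?v = "cyclic_pred C x"
  have gap: "C \<inter> cyclic_gap ?v x = {}"
    using cyclic_pred_gap[OF C] .
  show ?thesis
  proof (cases "?v < x")
    case True
    have D_inside: "?v < c \<and> c < x" if "c \<in> D" for c
      using D that True by (auto simp: cyclic_gap_def)
    have no_C: "b \<notin> C" if "c \<in> D" "d \<in> D" "c < b" "b < d" for b c d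
      using D_inside[OF that(1)] D_inside[OF that(2)] that(3,4) gap True
      by (auto simp: cyclic_gap_def)
    show ?thesis
      unfolding cross_def using no_C by metis
  next
    case False
    have C_inside: "x \<le> a \<and> a \<le> ?v" if "a \<in> C" for a
      using gap that False by (auto simp: cyclic_gap_def)
    have no_D: "c \<notin> D" if "a \<in> C" "b \<in> C" "a < c" "c < b" for a b c
      using C_inside[OF that(1)] C_inside[OF that(2)] that(3,4) D False
      by (auto simp: cyclic_gap_def)
    show ?thesis
      unfolding cross_def using no_D by metis
  qed
qed

lemma cyclic_gaps_cover:
  assumes C: "finite C" "C \<noteq> {}" and d: "d \<notin> C"
  shows "\<exists>x\<in>C. d \<in> cyclic_gap (cyclic_pred C x) x"
proof (cases "\<exists>y\<in>C. d < y")
  case True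
  define x where "x = Min {y\<in>C. d < y}"
  have "x \<in> {y\<in>C. d < y}"
    unfolding x_def using C True by (intro Min_in) auto
  then have x: "x \<in> C" "d < x" "\<forall>y\<in>C. d < y \<longrightarrow> x \<le> y"
    using C by (auto simp: x_def)
  have "cyclic_pred C x \<in> C"
    using cyclic_pred_in[OF C(1) x(1)] .
  then have "d \<in> cyclic_gap (cyclic_pred C x) x"
    using x d by (auto simp: cyclic_gap_def) (metis linorder_neqE_nat leD)
  with x show ?thesis by blast
next
  case False
  have "Min C \<in> C"
    using C by (rule Min_in)
  moreover have "cyclic_pred C (Min C) \<in> C"
    using C by (intro cyclic_pred_in Min_in)
  ultimately have "d \<in> cyclic_gap (cyclic_pred C (Min C)) (Min C)"
    using False C d by (auto simp: cyclic_gap_def) (metis linorder_neqE_nat)+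
  with \<open>Min C \<in> C\<close> show ?thesis by blast
qed

lemma cross_if_cyclic_gap_separates:
  assumes "v \<in> C" "x \<in> C" "c \<in> D" "d \<in> D" "d \<notin> C"
    and "c \<in> cyclic_gap v x" "d \<notin> cyclic_gap v x"
  shows "cross C D \<or> cross D C"
proof -
  have "d \<noteq> v" "d \<noteq> x"
    using assms by auto
  show ?thesis
  proof (cases "v < x")
    case True
    then have "v < c" "c < x" "d < v \<or> x < d"
      using assms \<open>d \<noteq> v\<close> \<open>d \<noteq> x\<close> by (auto simp: cyclic_gap_def)
    then show ?thesis
      unfolding cross_def using assms(1-4) by blast
  next
    case False
    then have "c < x \<or> v < c" "x < d" "d < v"
      using assms \<open>d \<noteq> v\<close> \<open>d \<noteq> x\<close> by (auto simp: cyclic_gap_def)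
    then show ?thesis
      unfolding cross_def using assms(1-4) by blast
  qed
qed

lemma in_cyclic_gap_if_not_cross:
  assumes C: "finite C" "C \<noteq> {}" and disj: "C \<inter> D = {}"
    and nc: "\<not> cross C D" "\<not> cross D C"
  shows "\<exists>x\<in>C. D \<subseteq> cyclic_gap (cyclic_pred C x) x"
proof (cases "D = {}")
  case True
  with C show ?thesis by auto
next
  case False
  then obtain c where "c \<in> D" by blast
  then obtain x where x: "x \<in> C" "c \<in> cyclic_gap (cyclic_pred C x) x"
    using cyclic_gaps_cover[OF C] disj by blast
  have "D \<subseteq> cyclic_gap (cyclic_pred C x) x"
    using cross_if_cyclic_gap_separates[OF cyclic_pred_in[OF C(1) x(1)] x(1) \<open>c \<in> D\<close> _ _ x(2)]
      nc disj by blast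
  with x show ?thesis by blast
qed

section \<open>Splitting and merging cycles\<close>

context
  fixes B :: "nat set" and j :: nat
  assumes B: "finite B" "j \<in> B" and Min_less: "Min B < j"
begin

lemma cyclic_pred_split_low_at_Min: "cyclic_pred {y\<in>B. y < j} (Min B) = cyclic_pred B j"
proof -
  let ?v = "cyclic_pred B j"
  have "Min B \<in> B"
    using B by (metis Min_in empty_iff)
  have "Min B \<le> ?v" "?v < j" "?v \<in> B"
    using cyclic_pred_less[OF B \<open>Min B \<in> B\<close> Min_less] cyclic_pred_in[OF B] by auto
  moreover have "B \<inter> {?v<..<j} = {}"
    using cyclic_pred_gap[OF B] \<open>?v < j\<close> by (simp add: cyclic_gap_def)
  moreover have "\<forall>y\<in>B. Min B \<le> y"
    using B(1) by simp
  ultimately have "{y\<in>B. y < j} \<inter> cyclic_gap ?v (Min B) = {}"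
    by (auto simp: cyclic_gap_def)
  then show ?thesis
    using cyclic_pred_eq_iff[of "{y\<in>B. y < j}" "Min B" ?v] B(1) \<open>Min B \<in> B\<close> Min_less
      \<open>?v \<in> B\<close> \<open>?v < j\<close> by simp
qed

lemma cyclic_pred_split_high_at_j: "cyclic_pred {y\<in>B. j \<le> y} j = Max B"
proof -
  have "Max B \<in> B" "j \<le> Max B" "\<forall>y\<in>B. y \<le> Max B"
    using B by (auto intro: Max_in)
  then have "Max B \<in> {y\<in>B. j \<le> y}" "{y\<in>B. j \<le> y} \<inter> cyclic_gap (Max B) j = {}"
    unfolding cyclic_gap_def by auto
  then show ?thesis
    using cyclic_pred_eq_iff[of "{y\<in>B. j \<le> y}" j] B by simp
qed

lemma cyclic_pred_split:
  assumes A: "A \<in> {{y\<in>B. y < j}, {y\<in>B. j \<le> y}}" and x: "x \<in> A"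
  shows "cyclic_pred A x = cyclic_pred B (transpose (Min B) j x)"
proof -
  have "A \<subseteq> B"
    using A by auto
  consider "x = Min B" "A = {y\<in>B. y < j}" | "x = j" "A = {y\<in>B. j \<le> y}" | "x \<noteq> Min B" "x \<noteq> j"
    using A x Min_less by (cases "x = Min B"; cases "x = j") auto
  then show ?thesis
  proof cases
    case 1
    then show ?thesis
      using cyclic_pred_split_low_at_Min by simp
  next
    case 2
    then show ?thesis
      using cyclic_pred_split_high_at_j by (simp add: cyclic_pred_def)
  next
    case 3
    have "Min B \<in> B" "Min B < x"
      using 3 x \<open>A \<subseteq> B\<close> B by (auto intro: Min_in simp: order_le_neq_trans)
    then have "cyclic_pred B x < x"
      using cyclic_pred_less(2)[OF B(1)] x \<open>A \<subseteq> B\<close> by blast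
    moreover have "j \<le> cyclic_pred B x" if "j < x"
      using cyclic_pred_less(1)[OF B(1) _ B(2) that] x \<open>A \<subseteq> B\<close> by auto
    ultimately have "cyclic_pred B x \<in> A"
      using A x 3 cyclic_pred_in[OF B(1), of x] \<open>A \<subseteq> B\<close> by auto
    then show ?thesis
      using cyclic_pred_subset[OF B(1) \<open>A \<subseteq> B\<close> x] 3 by simp
  qed
qed

end

lemma subset_one_side_if_no_straddle:
  fixes D :: "nat set"
  assumes "D \<subseteq> {s<..<j}" "D \<subseteq> {..<i} \<union> {m<..}" "i \<le> m"
    and no_straddle: "\<nexists>x y. x \<in> D \<and> y \<in> D \<and> x < i \<and> i < y \<and> y < j"
  shows "D \<subseteq> {s<..<i} \<or> D \<subseteq> {m<..<j}"
proof (cases "\<exists>d\<in>D. d < i")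
  case True
  then obtain d0 where "d0 \<in> D" "d0 < i"
    by blast
  have "d < i" if "d \<in> D" for d
    using subsetD[OF assms(1) that] subsetD[OF assms(2) that] assms(3) no_straddle
      \<open>d0 \<in> D\<close> \<open>d0 < i\<close> that by fastforce
  then show ?thesis
    using assms(1) by auto
next
  case False
  have "d \<in> {m<..<j}" if "d \<in> D" for d
    using subsetD[OF assms(1) that] subsetD[OF assms(2) that] False that by auto
  then show ?thesis
    by blast
qed

context
  fixes P Q :: "nat set" and j :: nat
  assumes P: "finite P" "P \<noteq> {}" and Q: "finite Q" "j \<in> Q"
    and inside: "P \<subseteq> {cyclic_pred Q j<..<j}"
begin

lemma nested_block_bounds:
  shows "cyclic_pred Q j < Min P" and "Min P \<le> Max P" and "Max P < j"
    and "Q \<inter> {cyclic_pred Q j<..<j} = {}" and "P \<inter> Q = {}"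
proof -
  show "cyclic_pred Q j < Min P" "Max P < j"
    using inside Min_in[OF P] Max_in[OF P] by auto
  moreover show "Min P \<le> Max P"
    using Min_le[OF P(1) Max_in[OF P]] .
  ultimately have "cyclic_pred Q j < j"
    by linarith
  then show "Q \<inter> {cyclic_pred Q j<..<j} = {}"
    using cyclic_pred_gap[OF Q] by (simp add: cyclic_gap_def)
  then show "P \<inter> Q = {}"
    using inside by blast
qed

lemma cyclic_pred_merge_at_Min: "cyclic_pred (P \<union> Q) (Min P) = cyclic_pred Q j"
proof -
  have "P \<inter> {cyclic_pred Q j<..<Min P} = {}"
    using Min_le[OF P(1)] by fastforce
  moreover have "Q \<inter> {cyclic_pred Q j<..<Min P} = {}"
    using nested_block_bounds(2-4) by auto
  ultimately show ?thesis
    using cyclic_pred_eq_iff[of "P \<union> Q" "Min P" "cyclic_pred Q j"] P Q Min_in[OF P]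
      cyclic_pred_in[OF Q] nested_block_bounds(1)
    by (simp add: cyclic_gap_def Int_Un_distrib2)
qed

lemma cyclic_pred_merge_at_j: "cyclic_pred (P \<union> Q) j = Max P"
proof -
  have "P \<inter> {Max P<..<j} = {}"
    using Max_ge[OF P(1)] by fastforce
  moreover have "Q \<inter> {Max P<..<j} = {}"
    using nested_block_bounds(1,2,4) by auto
  ultimately show ?thesis
    using cyclic_pred_eq_iff[of "P \<union> Q" j "Max P"] P Q Max_in[OF P] nested_block_bounds(3)
    by (simp add: cyclic_gap_def Int_Un_distrib2)
qed

lemma cyclic_pred_merge_left:
  assumes x: "x \<in> P" "x \<noteq> Min P"
  shows "cyclic_pred (P \<union> Q) x = cyclic_pred P x"
proof -
  have "Min P < x"
    using x P(1) by (simp add: order_le_neq_trans)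
  then have "Min P \<le> cyclic_pred P x" "cyclic_pred P x < x"
    using cyclic_pred_less[OF P(1) x(1) Min_in[OF P]] by auto
  moreover have "x < j"
    using x(1) Max_ge[OF P(1)] nested_block_bounds(3) by fastforce
  ultimately have "cyclic_gap (cyclic_pred P x) x \<subseteq> {cyclic_pred Q j<..<j}"
    using nested_block_bounds(1) by (auto simp: cyclic_gap_def)
  then show ?thesis
    using cyclic_pred_union[OF P(1) x(1) Q(1)] nested_block_bounds(4) by blast
qed

lemma cyclic_pred_merge_right:
  assumes x: "x \<in> Q" "x \<noteq> j"
  shows "cyclic_pred (P \<union> Q) x = cyclic_pred Q x"
proof -
  let ?s = "cyclic_pred Q j" and ?v = "cyclic_pred Q x"
  have "?s \<notin> cyclic_gap ?v x" "j \<notin> cyclic_gap ?v x"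
    using cyclic_pred_gap[OF Q(1) x(1)] cyclic_pred_in[OF Q] Q(2) by blast+
  moreover have "?v \<notin> {?s<..<j}" "x \<notin> {?s<..<j}"
    using nested_block_bounds(4) cyclic_pred_in[OF Q(1) x(1)] x(1) by blast+
  ultimately have "cyclic_gap ?v x \<inter> {?s<..<j} = {}"
    using x(2) by (auto simp: cyclic_gap_def split: if_splits)
  then have "P \<inter> cyclic_gap ?v x = {}"
    using inside by blast
  then show ?thesis
    using cyclic_pred_union[OF Q(1) x(1) P(1)] by (simp add: Un_commute)
qed

lemma cyclic_pred_merge:
  assumes B: "B \<in> {P, Q}" and x: "x \<in> P \<union> Q" "transpose (Min P) j x \<in> B"
  shows "cyclic_pred (P \<union> Q) x = cyclic_pred B (transpose (Min P) j x)"
proof -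
  have "Min P \<in> P" "j \<notin> P"
    using Min_in[OF P] Q(2) nested_block_bounds(5) by auto
  then consider "x = Min P" "B = Q" | "x = j" "B = P"
    | "x \<in> P" "x \<noteq> Min P" "x \<noteq> j" "B = P" | "x \<in> Q" "x \<noteq> Min P" "x \<noteq> j" "B = Q"
    using B x nested_block_bounds(5) Q(2) by (cases "x = Min P"; cases "x = j") auto
  moreover have "cyclic_pred P (Min P) = Max P"
    by (simp add: cyclic_pred_def)
  ultimately show ?thesis
    by cases (simp_all add: cyclic_pred_merge_at_Min cyclic_pred_merge_at_j cyclic_pred_merge_left
        cyclic_pred_merge_right)
qed

lemma not_cross_merge:
  assumes D: "D \<inter> (P \<union> Q) = {}" "\<not> cross P D" "\<not> cross D P" "\<not> cross Q D" "\<not> cross D Q"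
    and no_straddle: "\<nexists>x y. x \<in> D \<and> y \<in> D \<and> x < Min P \<and> Min P < y \<and> y < j"
  shows "\<not> cross (P \<union> Q) D \<and> \<not> cross D (P \<union> Q)"
proof -
  obtain x where x: "x \<in> Q" "D \<subseteq> cyclic_gap (cyclic_pred Q x) x"
    using in_cyclic_gap_if_not_cross[OF Q(1) _ _ D(4,5)] Q(2) D(1) by blast
  obtain y where y: "y \<in> P" "D \<subseteq> cyclic_gap (cyclic_pred P y) y"
    using in_cyclic_gap_if_not_cross[OF P _ D(2,3)] D(1) by blast
  have "\<exists>z\<in>P \<union> Q. D \<subseteq> cyclic_gap (cyclic_pred (P \<union> Q) z) z"
  proof (cases "x = j \<and> y = Min P")
    case False
    then show ?thesis
      using x y cyclic_pred_merge_left cyclic_pred_merge_right by (metis UnI1 UnI2)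
  next
    case True
    have "D \<subseteq> {cyclic_pred Q j<..<j}"
      using x True nested_block_bounds(1-3) by (simp add: cyclic_gap_def)
    moreover have "D \<subseteq> {..<Min P} \<union> {Max P<..}"
      using y True nested_block_bounds(2) by (simp add: cyclic_gap_def cyclic_pred_def)
    ultimately have "D \<subseteq> {cyclic_pred Q j<..<Min P} \<or> D \<subseteq> {Max P<..<j}"
      using subset_one_side_if_no_straddle nested_block_bounds(2) no_straddle by blast
    then show ?thesis
    proof
      assume "D \<subseteq> {cyclic_pred Q j<..<Min P}"
      then show ?thesis
        using cyclic_pred_merge_at_Min nested_block_bounds(1) Min_in[OF P]
        by (intro bexI[of _ "Min P"]) (auto simp: cyclic_gap_def)
    next
      assume "D \<subseteq> {Max P<..<j}"
      then show ?thesis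
        using cyclic_pred_merge_at_j nested_block_bounds(3) Q(2)
        by (intro bexI[of _ j]) (auto simp: cyclic_gap_def)
    qed
  qed
  then show ?thesis
    using not_cross_if_in_cyclic_gap P(1) Q(1) by blast
qed

end

section \<open>Noncrossing partitions and their permutations\<close>

lemma nc_partition_Union: "nc_partition n Ps \<Longrightarrow> \<Union>Ps = {1..n}"
  by (simp add: nc_partition_def partition_on_def)

lemma nc_partition_block_subset: "nc_partition n Ps \<Longrightarrow> B \<in> Ps \<Longrightarrow> B \<subseteq> {1..n}"
  by (metis Union_upper nc_partition_Union)

lemma nc_partition_finite_block: "nc_partition n Ps \<Longrightarrow> B \<in> Ps \<Longrightarrow> finite B"
  by (meson finite_atLeastAtMost finite_subset nc_partition_block_subset)

lemma nc_partition_block_exists: "nc_partition n Ps \<Longrightarrow> x \<in> {1..n} \<Longrightarrow> \<exists>B\<in>Ps. x \<in> B"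
  by (metis UnionE nc_partition_Union)

lemma partition_on_block_unique:
  assumes "partition_on A Ps" "P \<in> Ps" "Q \<in> Ps" "x \<in> P" "x \<in> Q"
  shows "P = Q"
  using assms(2-) partition_onD2[OF assms(1)] by (metis disjnt_iff pairwiseD)

lemma nc_partition_block_unique:
  "nc_partition n Ps \<Longrightarrow> P \<in> Ps \<Longrightarrow> Q \<in> Ps \<Longrightarrow> x \<in> P \<Longrightarrow> x \<in> Q \<Longrightarrow> P = Q"
  by (meson nc_partition_def partition_on_block_unique)

lemma nc_partition_not_cross: "nc_partition n Ps \<Longrightarrow> P \<in> Ps \<Longrightarrow> Q \<in> Ps \<Longrightarrow> P \<noteq> Q \<Longrightarrow> \<not> cross P Q"
  by (simp add: nc_partition_def noncrossing_iff_not_cross)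

lemma assoc_perm_block:
  assumes "partition_on A Ps" "B \<in> Ps" "x \<in> B"
  shows "assoc_perm Ps x = cyclic_pred B x"
proof -
  have "(THE B. B \<in> Ps \<and> x \<in> B) = B"
  proof (rule the_equality)
    show "B \<in> Ps \<and> x \<in> B"
      using assms(2,3) ..
    show "B' = B" if "B' \<in> Ps \<and> x \<in> B'" for B'
      using that assms partition_on_block_unique by metis
  qed
  then show ?thesis
    using assms unfolding assoc_perm_def cyclic_pred_def by (auto simp: Let_def)
qed

lemma assoc_perm_outside: "nc_partition n Ps \<Longrightarrow> x \<notin> {1..n} \<Longrightarrow> assoc_perm Ps x = x"
  using nc_partition_Union[of n Ps] by (auto simp: assoc_perm_def)

lemma orbit_assoc_perm:
  assumes P: "nc_partition n Ps" and B: "B \<in> Ps" "x \<in> B"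
  shows "orbit (assoc_perm Ps) x = B"
proof
  have fin: "finite B"
    using nc_partition_finite_block[OF P B(1)] .
  have pred: "assoc_perm Ps y = cyclic_pred B y" if "y \<in> B" for y
    using P B(1) that assoc_perm_block unfolding nc_partition_def by blast
  show "orbit (assoc_perm Ps) x \<subseteq> B"
  proof
    fix y assume "y \<in> orbit (assoc_perm Ps) x"
    then show "y \<in> B"
      by induction (simp_all add: B(2) fin pred cyclic_pred_in)
  qed
  show "B \<subseteq> orbit (assoc_perm Ps) x"
    using fin
  proof (rule cyclic_pred_closed_imp_subset)
    show "cyclic_pred B x \<in> B \<inter> orbit (assoc_perm Ps) x"
      using orbit.base[of "assoc_perm Ps" x] pred[OF B(2)] cyclic_pred_in[OF fin B(2)] by simp
    show "\<forall>y\<in>B \<inter> orbit (assoc_perm Ps) x. cyclic_pred B y \<in> orbit (assoc_perm Ps) x"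
    proof
      fix y assume "y \<in> B \<inter> orbit (assoc_perm Ps) x"
      then show "cyclic_pred B y \<in> orbit (assoc_perm Ps) x"
        using orbit.step[of y "assoc_perm Ps" x] pred[of y] by simp
    qed
  qed
qed

lemma in_NC_if_cyclic_pred_on_blocks:
  assumes Q: "nc_partition n Qs"
    and blocks: "\<forall>Q\<in>Qs. \<forall>x\<in>Q. \<tau> x = cyclic_pred Q x"
    and outside: "\<forall>x. x \<notin> {1..n} \<longrightarrow> \<tau> x = x"
  shows "\<tau> \<in> NC n"
proof -
  have "\<tau> x = assoc_perm Qs x" for x
  proof (cases "x \<in> {1..n}")
    case True
    then obtain B where "B \<in> Qs" "x \<in> B"
      using nc_partition_block_exists[OF Q] by blast
    then show ?thesis
      using blocks assoc_perm_block Q unfolding nc_partition_def by metis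
  next
    case False
    then show ?thesis
      using outside assoc_perm_outside[OF Q] by simp
  qed
  then show ?thesis
    using Q unfolding NC_def by blast
qed

lemma partition_on_regroup:
  assumes Ps: "partition_on A Ps" and Rs: "Rs \<subseteq> Ps"
    and Ns: "\<Union>Ns = \<Union>Rs" "disjoint Ns" "{} \<notin> Ns"
  shows "partition_on A (Ns \<union> (Ps - Rs))"
proof (rule partition_onI)
  show "\<Union>(Ns \<union> (Ps - Rs)) = A"
    using Ns(1) Rs partition_onD1[OF Ps] by blast
  have "\<Union>Rs \<inter> \<Union>(Ps - Rs) = {}"
    using Rs partition_on_block_unique[OF Ps] by blast
  moreover have "disjoint (Ps - Rs)"
    using partition_onD2[OF Ps] by (rule pairwise_subset) blast
  ultimately have "disjoint (Ns \<union> (Ps - Rs))"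
    using Ns(1,2) by (intro disjoint_union) auto
  then show "disjnt p q" if "p \<in> Ns \<union> (Ps - Rs)" "q \<in> Ns \<union> (Ps - Rs)" "p \<noteq> q" for p q
    using that by (simp add: pairwiseD)
  show "{} \<notin> Ns \<union> (Ps - Rs)"
    using Ns(3) partition_onD3[OF Ps] by blast
qed

lemma transpose_in_NC_if_regroup:
  assumes P: "nc_partition n Ps" and Rs: "Rs \<subseteq> Ps"
    and Ns: "\<Union>Ns = \<Union>Rs" "disjoint Ns" "{} \<notin> Ns"
    and nc: "\<forall>N\<in>Ns. \<forall>D\<in>Ns \<union> (Ps - Rs). N \<noteq> D \<longrightarrow> \<not> cross N D \<and> \<not> cross D N"
    and ij: "i \<in> \<Union>Rs" "j \<in> \<Union>Rs"
    and pred: "\<forall>N\<in>Ns. \<forall>x\<in>N. cyclic_pred N x = assoc_perm Ps (transpose i j x)"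
  shows "assoc_perm Ps \<circ> transpose i j \<in> NC n"
proof (rule in_NC_if_cyclic_pred_on_blocks)
  have Ps: "partition_on {1..n} Ps"
    using P by (simp add: nc_partition_def)
  have "noncrossing (Ns \<union> (Ps - Rs))"
    unfolding noncrossing_iff_not_cross using nc nc_partition_not_cross[OF P] by blast
  then show "nc_partition n (Ns \<union> (Ps - Rs))"
    using partition_on_regroup[OF Ps Rs Ns] by (simp add: nc_partition_def)
  show "\<forall>Q\<in>Ns \<union> (Ps - Rs). \<forall>x\<in>Q. (assoc_perm Ps \<circ> transpose i j) x = cyclic_pred Q x"
  proof (intro ballI)
    fix Q x assume "Q \<in> Ns \<union> (Ps - Rs)" "x \<in> Q"
    then consider "Q \<in> Ns" | "Q \<in> Ps - Rs" "x \<noteq> i" "x \<noteq> j"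
      using ij Rs partition_on_block_unique[OF Ps] by blast
    then show "(assoc_perm Ps \<circ> transpose i j) x = cyclic_pred Q x"
      by cases (use pred \<open>x \<in> Q\<close> assoc_perm_block[OF Ps] in auto)
  qed
  have "i \<in> {1..n}" "j \<in> {1..n}"
    using ij Rs nc_partition_block_subset[OF P] by blast+
  then show "\<forall>x. x \<notin> {1..n} \<longrightarrow> (assoc_perm Ps \<circ> transpose i j) x = x"
    using assoc_perm_outside[OF P] by auto
qed

section \<open>Multiplying by a transposition\<close>

lemma transpose_split_in_NC:
  assumes P: "nc_partition n Ps" and B: "B \<in> Ps" "j \<in> B" and i: "i = Min B" "i < j"
  shows "assoc_perm Ps \<circ> transpose i j \<in> NC n"
proof -
  have fin: "finite B"
    using nc_partition_finite_block[OF P B(1)] .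
  have "i \<in> B"
    using fin B(2) i(1) by (metis Min_in empty_iff)
  have Ps: "partition_on {1..n} Ps"
    using P by (simp add: nc_partition_def)
  define Ns where "Ns = {{y\<in>B. y < j}, {y\<in>B. j \<le> y}}"
  show ?thesis
  proof (rule transpose_in_NC_if_regroup[OF P, of "{B}" Ns])
    show "{B} \<subseteq> Ps" "\<Union>Ns = \<Union>{B}" "disjoint Ns" "{} \<notin> Ns"
      using B \<open>i \<in> B\<close> i(2) by (auto simp: Ns_def disjoint_def)
    show "i \<in> \<Union>{B}" "j \<in> \<Union>{B}"
      using \<open>i \<in> B\<close> B(2) by auto
    have "\<not> cross N D \<and> \<not> cross D N" if "N \<in> Ns" "D \<in> Ns \<union> (Ps - {B})" "N \<noteq> D" for N D
    proof (cases "D \<in> Ns")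
      case True
      with that show ?thesis
        by (auto simp: Ns_def cross_def)
    next
      case False
      then have "\<not> cross B D" "\<not> cross D B"
        using that(2) nc_partition_not_cross[OF P B(1)] nc_partition_not_cross[OF P _ B(1)] by blast+
      moreover have "N \<subseteq> B"
        using that(1) by (auto simp: Ns_def)
      ultimately show ?thesis
        using cross_mono by blast
    qed
    then show "\<forall>N\<in>Ns. \<forall>D\<in>Ns \<union> (Ps - {B}). N \<noteq> D \<longrightarrow> \<not> cross N D \<and> \<not> cross D N"
      by blast
    show "\<forall>N\<in>Ns. \<forall>x\<in>N. cyclic_pred N x = assoc_perm Ps (transpose i j x)"
    proof (intro ballI)
      fix N x assume "N \<in> Ns" "x \<in> N"
      then have "transpose i j x \<in> B"
        using \<open>i \<in> B\<close> B(2) by (auto simp: Ns_def transpose_def)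
      then show "cyclic_pred N x = assoc_perm Ps (transpose i j x)"
        using cyclic_pred_split[OF fin B(2) i(2)[unfolded i(1)]] \<open>N \<in> Ns\<close> \<open>x \<in> N\<close>
          assoc_perm_block[OF Ps B(1)] i(1) by (simp add: Ns_def)
    qed
  qed
qed

text \<open>The first point of a straddling block above \<open>i\<close> has its predecessor below \<open>i\<close>.\<close>
lemma no_straddle_if_minimal:
  assumes P: "nc_partition n Ps" and D: "D \<in> Ps" "i \<notin> D"
    and minimal: "\<forall>k\<in>{1..n}. assoc_perm Ps k < i \<and> i < k \<longrightarrow> j \<le> k"
  shows "\<nexists>x y. x \<in> D \<and> y \<in> D \<and> x < i \<and> i < y \<and> y < j"
proof
  assume "\<exists>x y. x \<in> D \<and> y \<in> D \<and> x < i \<and> i < y \<and> y < j"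
  then obtain x y where xy: "x \<in> D" "y \<in> D" "x < i" "i < y" "y < j"
    by blast
  have fin: "finite D"
    using nc_partition_finite_block[OF P D(1)] .
  define k where "k = Min {z\<in>D. i < z}"
  have "k \<in> {z\<in>D. i < z}"
    unfolding k_def using fin xy(2,4) by (intro Min_in) auto
  then have k: "k \<in> D" "i < k" "\<forall>z\<in>D. i < z \<longrightarrow> k \<le> z"
    using fin by (auto simp: k_def)
  have "cyclic_pred D k < k" "cyclic_pred D k \<in> D"
    using cyclic_pred_less(2)[OF fin k(1) xy(1)] cyclic_pred_in[OF fin k(1)] xy(3) k(2) by simp_all
  then have "assoc_perm Ps k < i"
    using k(1,3) D(2) assoc_perm_block[of "{1..n}" Ps D k] P D(1)
    by (metis leD linorder_neqE_nat nc_partition_def)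
  moreover have "k \<in> {1..n}"
    using nc_partition_block_subset[OF P D(1)] k(1) by blast
  ultimately have "j \<le> k"
    using minimal k(2) by blast
  moreover have "k \<le> y"
    using k(3) xy(2,4) by blast
  ultimately show False
    using xy(5) by simp
qed

lemma block_inside_gap:
  assumes P: "nc_partition n Ps" and Bi: "Bi \<in> Ps" "i \<in> Bi" "i = Min Bi"
    and Bj: "Bj \<in> Ps" "j \<in> Bj" "j \<notin> Bi" and ij: "i < j" and below: "cyclic_pred Bj j < i"
  shows "Bi \<subseteq> {cyclic_pred Bj j<..<j}"
proof
  fix y assume "y \<in> Bi"
  have "cyclic_pred Bj j \<in> Bj"
    using cyclic_pred_in[OF nc_partition_finite_block[OF P Bj(1)] Bj(2)] .
  then have "\<not> j < y"
    using nc_partition_not_cross[OF P Bj(1) Bi(1)] Bj(2,3) Bi(2) \<open>y \<in> Bi\<close> below ij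
    unfolding cross_def by blast
  moreover have "i \<le> y" "y \<noteq> j"
    using nc_partition_finite_block[OF P Bi(1)] \<open>y \<in> Bi\<close> Bi(3) Bj(3) by auto
  ultimately show "y \<in> {cyclic_pred Bj j<..<j}"
    using below by simp
qed

lemma transpose_merge_in_NC:
  assumes P: "nc_partition n Ps" and Bi: "Bi \<in> Ps" "i \<in> Bi" "i = Min Bi"
    and j: "j \<in> {1..n}" "j \<notin> Bi" "i < j"
    and below: "assoc_perm Ps j < i"
    and minimal: "\<forall>k\<in>{1..n}. assoc_perm Ps k < i \<and> i < k \<longrightarrow> j \<le> k"
  shows "assoc_perm Ps \<circ> transpose i j \<in> NC n"
proof -
  have Ps: "partition_on {1..n} Ps"
    using P by (simp add: nc_partition_def)
  obtain Bj where Bj: "Bj \<in> Ps" "j \<in> Bj"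
    using nc_partition_block_exists[OF P j(1)] by blast
  have fin: "finite Bi" "Bi \<noteq> {}" "finite Bj"
    using nc_partition_finite_block[OF P] Bi(1,2) Bj(1) by auto
  have inside: "Bi \<subseteq> {cyclic_pred Bj j<..<j}"
    using block_inside_gap[OF P Bi Bj j(2,3)] below assoc_perm_block[OF Ps Bj] by simp
  show ?thesis
  proof (rule transpose_in_NC_if_regroup[OF P, of "{Bi, Bj}" "{Bi \<union> Bj}"])
    show "{Bi, Bj} \<subseteq> Ps" "\<Union>{Bi \<union> Bj} = \<Union>{Bi, Bj}" "disjoint {Bi \<union> Bj}" "{} \<notin> {Bi \<union> Bj}"
      "i \<in> \<Union>{Bi, Bj}" "j \<in> \<Union>{Bi, Bj}"
      using Bi Bj by (auto simp: disjoint_def)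
    show "\<forall>N\<in>{Bi \<union> Bj}. \<forall>D\<in>{Bi \<union> Bj} \<union> (Ps - {Bi, Bj}). N \<noteq> D \<longrightarrow> \<not> cross N D \<and> \<not> cross D N"
    proof (intro ballI impI)
      fix N D assume "N \<in> {Bi \<union> Bj}" "D \<in> {Bi \<union> Bj} \<union> (Ps - {Bi, Bj})" "N \<noteq> D"
      then have N: "N = Bi \<union> Bj" and D: "D \<in> Ps" "D \<noteq> Bi" "D \<noteq> Bj"
        by auto
      have "D \<inter> (Bi \<union> Bj) = {}" "i \<notin> D"
        using D Bi(1,2) Bj(1) nc_partition_block_unique[OF P] by blast+
      moreover have "\<not> cross Bi D" "\<not> cross D Bi" "\<not> cross Bj D" "\<not> cross D Bj"
        using nc_partition_not_cross[OF P] D Bi(1) Bj(1) by metis+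
      ultimately show "\<not> cross N D \<and> \<not> cross D N"
        unfolding N using not_cross_merge[OF fin(1,2,3) Bj(2) inside]
          no_straddle_if_minimal[OF P D(1) _ minimal] Bi(3) by blast
    qed
    show "\<forall>N\<in>{Bi \<union> Bj}. \<forall>x\<in>N. cyclic_pred N x = assoc_perm Ps (transpose i j x)"
    proof (intro ballI)
      fix N x assume "N \<in> {Bi \<union> Bj}" "x \<in> N"
      then have N: "N = Bi \<union> Bj" and x: "x \<in> Bi \<union> Bj"
        by auto
      have "transpose i j x \<in> Bi \<union> Bj"
        using x Bi(2) Bj(2) by (cases "x = i"; cases "x = j") auto
      then obtain B where B: "B \<in> {Bi, Bj}" "transpose i j x \<in> B"
        by blast
      then have "assoc_perm Ps (transpose i j x) = cyclic_pred B (transpose i j x)"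
        using assoc_perm_block[OF Ps] Bi(1) Bj(1) by blast
      moreover have "cyclic_pred (Bi \<union> Bj) x = cyclic_pred B (transpose (Min Bi) j x)"
        using cyclic_pred_merge[OF fin(1,2,3) Bj(2) inside B(1) x B(2)[unfolded Bi(3)]] .
      ultimately show "cyclic_pred N x = assoc_perm Ps (transpose i j x)"
        using N Bi(3) by simp
    qed
  qed
qed

lemma assoc_perm_ge_if_between:
  assumes P: "nc_partition n Ps" and Q: "Q \<in> Ps" "i \<in> Q" "j \<in> Q"
    and k: "k \<in> {1..n}" "i < k" "k < j"
  shows "i \<le> assoc_perm Ps k"
proof -
  obtain Qk where Qk: "Qk \<in> Ps" "k \<in> Qk"
    using nc_partition_block_exists[OF P k(1)] by blast
  have fin: "finite Qk"
    using nc_partition_finite_block[OF P Qk(1)] .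
  have pred: "assoc_perm Ps k = cyclic_pred Qk k"
    using assoc_perm_block[OF _ Qk] P by (auto simp: nc_partition_def)
  show ?thesis
  proof (cases "Qk = Q")
    case True
    then show ?thesis
      using cyclic_pred_less(1)[OF fin Qk(2)] Q(2) k(2) pred by simp
  next
    case False
    have "cyclic_pred Qk k \<in> Qk"
      using cyclic_pred_in[OF fin Qk(2)] .
    moreover have "\<not> cross Qk Q"
      using nc_partition_not_cross[OF P Qk(1) Q(1) False] .
    ultimately show ?thesis
      using Qk(2) Q(2,3) k(2,3) pred unfolding cross_def by (metis not_le)
  qed
qed

lemma Min_if_le_assoc_perm:
  assumes P: "nc_partition n Ps" and B: "B \<in> Ps" "x \<in> B" and le: "x \<le> assoc_perm Ps x"
  shows "x = Min B"
proof -
  have fin: "finite B"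
    using nc_partition_finite_block[OF P B(1)] .
  have "x \<le> cyclic_pred B x"
    using le assoc_perm_block[OF _ B] P by (auto simp: nc_partition_def)
  then have "\<forall>y\<in>B. x \<le> y"
    using cyclic_pred_ge(1)[OF fin B(2)] by blast
  then show ?thesis
    using fin B(2) by (intro Min_eqI[symmetric]) auto
qed

text \<open>Following \<open>\<tau>\<close> from \<open>j\<close> enters \<open>B\<close> right after \<open>i\<close> and can only leave \<open>B\<close> at \<open>i\<close>.\<close>
lemma transposed_block_contains:
  assumes B: "finite B" "i \<in> B" "j \<notin> B" and Q: "finite Q" "j \<in> Q"
    and \<tau>_Q: "\<forall>x\<in>Q. \<tau> x = cyclic_pred Q x"
    and \<tau>_j: "\<tau> j = cyclic_pred B i"
    and \<tau>_B: "\<forall>x\<in>B - {i}. \<tau> x = cyclic_pred B x"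
  shows "i \<in> Q"
proof (rule ccontr)
  assume "i \<notin> Q"
  have "B \<subseteq> Q"
  proof (rule cyclic_pred_closed_imp_subset[OF B(1)])
    show "cyclic_pred B i \<in> B \<inter> Q"
      using cyclic_pred_in[OF B(1,2)] cyclic_pred_in[OF Q] \<tau>_Q Q(2) \<tau>_j by auto
    show "\<forall>x\<in>B \<inter> Q. cyclic_pred B x \<in> Q"
    proof
      fix x assume x: "x \<in> B \<inter> Q"
      then have "x \<in> B - {i}"
        using \<open>i \<notin> Q\<close> by blast
      then have "cyclic_pred B x = cyclic_pred Q x"
        using \<tau>_B \<tau>_Q x by (metis IntD2)
      then show "cyclic_pred B x \<in> Q"
        using cyclic_pred_in[OF Q(1)] x by simp
    qed
  qed
  then show False
    using B(2) \<open>i \<notin> Q\<close> by blast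
qed

lemma merge_conditions_if_transpose_in_NC:
  assumes P: "nc_partition n Ps" and Bi: "Bi \<in> Ps" "i \<in> Bi"
    and j: "j \<in> {1..n}" "j \<notin> Bi" "i < j"
    and NC: "assoc_perm Ps \<circ> transpose i j \<in> NC n"
    and inv: "assoc_perm Ps j < assoc_perm Ps i"
  shows "i \<le> assoc_perm Ps i" "assoc_perm Ps j < i"
    "\<forall>k\<in>{1..n}. assoc_perm Ps k < i \<and> i < k \<longrightarrow> j \<le> k"
proof -
  define \<sigma> \<tau> where "\<sigma> = assoc_perm Ps" and "\<tau> = assoc_perm Ps \<circ> transpose i j"
  obtain Qs where Qs: "nc_partition n Qs" and \<tau>: "\<tau> = assoc_perm Qs"
    using NC unfolding NC_def \<tau>_def by blast
  obtain Q where Q: "Q \<in> Qs" "j \<in> Q"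
    using nc_partition_block_exists[OF Qs j(1)] by blast
  have finQ: "finite Q" and finBi: "finite Bi"
    using nc_partition_finite_block Qs P Q(1) Bi(1) by auto
  have \<tau>_Q: "\<tau> x = cyclic_pred Q x" if "x \<in> Q" for x
    using assoc_perm_block[OF _ Q(1) that] Qs \<tau> by (auto simp: nc_partition_def)
  have \<sigma>_Bi: "\<sigma> x = cyclic_pred Bi x" if "x \<in> Bi" for x
    using assoc_perm_block[OF _ Bi(1) that] P \<sigma>_def by (auto simp: nc_partition_def)
  have \<tau>_i: "\<tau> i = \<sigma> j" and \<tau>_j: "\<tau> j = \<sigma> i"
    by (simp_all add: \<sigma>_def \<tau>_def)
  have \<tau>_other: "\<tau> x = \<sigma> x" if "x \<noteq> i" "x \<noteq> j" for x
    using that by (simp add: \<sigma>_def \<tau>_def)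
  have "i \<in> Q"
  proof (rule transposed_block_contains[OF finBi Bi(2) j(2) finQ Q(2)])
    show "\<forall>x\<in>Q. \<tau> x = cyclic_pred Q x"
      using \<tau>_Q by blast
    show "\<tau> j = cyclic_pred Bi i"
      using \<tau>_j \<sigma>_Bi[OF Bi(2)] by simp
    show "\<forall>x\<in>Bi - {i}. \<tau> x = cyclic_pred Bi x"
      using \<tau>_other \<sigma>_Bi j(2) by (metis DiffE singletonI)
  qed
  have "i \<le> cyclic_pred Q j"
    using cyclic_pred_less(1)[OF finQ Q(2) \<open>i \<in> Q\<close> j(3)] .
  then show "i \<le> assoc_perm Ps i"
    using \<tau>_Q[OF Q(2)] \<tau>_j by (simp add: \<sigma>_def)
  show "assoc_perm Ps j < i"
  proof (rule ccontr)
    assume "\<not> assoc_perm Ps j < i"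
    then have "i \<le> cyclic_pred Q i"
      using \<tau>_Q[OF \<open>i \<in> Q\<close>] \<tau>_i by (simp add: \<sigma>_def)
    then have "\<tau> j \<le> \<tau> i"
      using cyclic_pred_ge(2)[OF finQ \<open>i \<in> Q\<close>] cyclic_pred_in[OF finQ Q(2)] \<tau>_Q Q(2) \<open>i \<in> Q\<close>
      by simp
    then show False
      using inv \<tau>_i \<tau>_j by (simp add: \<sigma>_def)
  qed
  show "\<forall>k\<in>{1..n}. assoc_perm Ps k < i \<and> i < k \<longrightarrow> j \<le> k"
  proof (intro ballI impI)
    fix k assume k: "k \<in> {1..n}" "assoc_perm Ps k < i \<and> i < k"
    have "i \<le> \<tau> k" and "\<tau> k = assoc_perm Ps k" if "k < j"
      using assoc_perm_ge_if_between[OF Qs Q(1) \<open>i \<in> Q\<close> Q(2) k(1)] \<tau>_other k(2) that \<tau>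
      by (simp_all add: \<sigma>_def)
    then show "j \<le> k"
      using k(2) by (metis leD leI)
  qed
qed

section \<open>Noncrossing inversions\<close>

lemma Inv_NC_assoc_perm_imp:
  assumes P: "nc_partition n Ps" and Bi: "Bi \<in> Ps" "i \<in> Bi" and j: "j \<in> {1..n}" "i < j"
    and Inv: "(i, j) \<in> Inv_NC n (assoc_perm Ps)"
  shows "i = Min Bi \<and>
           (j \<in> Bi \<or>
            (assoc_perm Ps j < i \<and> (\<forall>k\<in>{1..n}. assoc_perm Ps k < i \<and> i < k \<longrightarrow> j \<le> k)))"
proof -
  have NC: "assoc_perm Ps \<circ> transpose i j \<in> NC n" and inv: "assoc_perm Ps j < assoc_perm Ps i"
    using Inv unfolding Inv_NC_def by auto
  show ?thesis
  proof (cases "j \<in> Bi")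
    case True
    have "i \<le> assoc_perm Ps j"
      using cyclic_pred_less(1)[OF nc_partition_finite_block[OF P Bi(1)] True Bi(2) j(2)]
        assoc_perm_block[OF _ Bi(1) True] P by (auto simp: nc_partition_def)
    then show ?thesis
      using Min_if_le_assoc_perm[OF P Bi] inv True by simp
  next
    case False
    then show ?thesis
      using merge_conditions_if_transpose_in_NC[OF P Bi j(1) False j(2) NC inv]
        Min_if_le_assoc_perm[OF P Bi] by simp
  qed
qed

lemma Inv_NC_assoc_perm_if:
  assumes P: "nc_partition n Ps" and Bi: "Bi \<in> Ps" "i \<in> Bi" "i = Min Bi"
    and j: "j \<in> {1..n}" "i < j"
    and cases: "j \<in> Bi \<or>
      (assoc_perm Ps j < i \<and> (\<forall>k\<in>{1..n}. assoc_perm Ps k < i \<and> i < k \<longrightarrow> j \<le> k))"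
  shows "(i, j) \<in> Inv_NC n (assoc_perm Ps)"
proof -
  have fin: "finite Bi"
    using nc_partition_finite_block[OF P Bi(1)] .
  have pred: "assoc_perm Ps x = cyclic_pred Bi x" if "x \<in> Bi" for x
    using assoc_perm_block[OF _ Bi(1) that] P by (auto simp: nc_partition_def)
  have "i \<in> {1..n}"
    using nc_partition_block_subset[OF P Bi(1)] Bi(2) by blast
  moreover have "assoc_perm Ps i = Max Bi"
    using pred[OF Bi(2)] Bi(3) by (simp add: cyclic_pred_def)
  moreover have "assoc_perm Ps \<circ> transpose i j \<in> NC n \<and> assoc_perm Ps j < Max Bi"
  proof (cases "j \<in> Bi")
    case True
    have "assoc_perm Ps j < j" "j \<le> Max Bi"
      using cyclic_pred_less(2)[OF fin True Bi(2) j(2)] pred[OF True] fin True by auto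
    then show ?thesis
      using transpose_split_in_NC[OF P Bi(1) True Bi(3) j(2)] by simp
  next
    case False
    have "i \<le> Max Bi"
      using fin Bi(2) by simp
    then show ?thesis
      using transpose_merge_in_NC[OF P Bi j(1) False j(2)] cases False by simp
  qed
  ultimately show ?thesis
    using j unfolding Inv_NC_def by auto
qed

theorem proposition8p16:
  fixes n i j :: nat and \<sigma> :: "nat \<Rightarrow> nat"
  assumes "\<sigma> \<in> NC n" and "1 \<le> i" and "i < j" and "j \<le> n"
  shows "(i, j) \<in> Inv_NC n \<sigma> \<longleftrightarrow>
           (i = Min (orbit \<sigma> i) \<and>
            (j \<in> orbit \<sigma> i \<or>
             (\<sigma> j < i \<and> i < j \<and>
              (\<forall>k \<in> {1..n}. \<sigma> k < i \<and> i < k \<longrightarrow> j \<le> k))))"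
proof -
  obtain Ps where P: "nc_partition n Ps" and \<sigma>: "\<sigma> = assoc_perm Ps"
    using assms(1) unfolding NC_def by blast
  obtain Bi where Bi: "Bi \<in> Ps" "i \<in> Bi"
    using nc_partition_block_exists[OF P] assms(2-4) by fastforce
  have j: "j \<in> {1..n}"
    using assms(2-4) by simp
  have "orbit \<sigma> i = Bi"
    using orbit_assoc_perm[OF P Bi] \<sigma> by simp
  then show ?thesis
    using Inv_NC_assoc_perm_imp[OF P Bi j assms(3)] Inv_NC_assoc_perm_if[OF P Bi _ j assms(3)]
      assms(3) \<sigma> by auto
qed

end
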